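(* Let $(V,\|\cdot\|_V)$ be a normed vector space, $\mathcal{F},\Theta$ compact topological spaces with topologies generated by (pseudo-)metrics, and $E\colon V\times\mathcal{F}\times\Theta\to\mathbb{R}$ satisfying (EC) [for each $v$, $E(v,\cdot,\cdot)$ is continuous on $\mathcal{F}\times\Theta$] and (Lip) [for some $L\ge0$, each $E(\cdot,f,\theta)$ is $L$-Lipschitz on $V$]. Let $\bar v\in V$, $U\subseteq V$ convex, and $T_{\bar v}U:=\mathrm{cl}\{(v-\bar v)/t:t>0,v\in U\}$. Assume (Lin) for each $(f,\theta)$ the map $\Delta_{\bar v}E(\cdot,f,\theta)\colon V\to\mathbb{R}$, $v\mapsto E(\bar v+v,f,\theta)-E(\bar v,f,\theta)$, is linear; (DC) for each $h\in T_{\bar v}U$, the function $\theta\mapsto\sup_{f\in S(\bar v,\theta)}\Delta_{\bar v}E(h,f,\theta)$ is lower semi-continuous on $\Theta$. Then $\Psi\colon V\to C(\Theta)$, $\Psi(v)=(\sup_{f\in\mathcal{F}}E(v,f,\theta))_{\theta\in\Theta}$, is Hadamard directionally differentiable at $\bar v$ tangentially to $U$, with derivative $$D^H_{\bar v}\Psi\colon T_{\bar v}U\to C(\Theta),\quad h\mapsto\Big(\sup_{f\in S(\bar v,\theta)}\Delta_{\bar v}E(h,f,\theta)\Big)_{\theta\in\Theta},$$ i.e., for all $t_n\searrow0$ and $h_n\to h\in T_{\bar v}U$ with $\bar v+t_nh_n\in U$, $\|(\Psi(\bar v+t_nh_n)-\Psi(\bar v))/t_n-D^H_{\bar v}\P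si(h)\|_{C(\Theta)}\to0$.
   Context: $S(\bar v,\theta):=\{f\in\mathcal{F}:E(\bar v,f,\theta)=\sup_{f'\in\mathcal{F}}E(\bar v,f',\theta)\}$. $C(\Theta)$: bounded continuous real functions on $\Theta$ with uniform norm; $\mathrm{cl}$ denotes closure in $V$. *)

theory Defs
  imports "HOL-Analysis.Analysis"
begin

definition lsc_on :: "'a::topological_space set \<Rightarrow> ('a \<Rightarrow> real) \<Rightarrow> bool" where
  "lsc_on S g \<longleftrightarrow> (\<forall>x\<in>S. \<forall>a. a < g x \<longrightarrow> (\<forall>\<^sub>F y in at x within S. a < g y))"

definition supE :: "('v \<Rightarrow> 'f \<Rightarrow> 't \<Rightarrow> real) \<Rightarrow> 'f set \<Rightarrow> 'v \<Rightarrow> 't \<Rightarrow> real" where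
  "supE E Fs v \<theta> = (SUP f\<in>Fs. E v f \<theta>)"

definition argmaxE :: "('v \<Rightarrow> 'f \<Rightarrow> 't \<Rightarrow> real) \<Rightarrow> 'f set \<Rightarrow> 'v \<Rightarrow> 't \<Rightarrow> 'f set" where
  "argmaxE E Fs v \<theta> = {f\<in>Fs. E v f \<theta> = supE E Fs v \<theta>}"

definition DeltaE :: "('v::plus \<Rightarrow> 'f \<Rightarrow> 't \<Rightarrow> real) \<Rightarrow> 'v \<Rightarrow> 'v \<Rightarrow> 'f \<Rightarrow> 't \<Rightarrow> real" where
  "DeltaE E vb v f \<theta> = E (vb + v) f \<theta> - E vb f \<theta>"

definition tangent_cone :: "'v::real_normed_vector \<Rightarrow> 'v set \<Rightarrow> 'v set" where
  "tangent_cone vb U = closure {(1 / t) *\<^sub>R (v - vb) | t v. t > 0 \<and> v \<in> U}"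

definition DH :: "('v::real_normed_vector \<Rightarrow> 'f \<Rightarrow> 't \<Rightarrow> real) \<Rightarrow> 'f set \<Rightarrow> 'v \<Rightarrow> 'v \<Rightarrow> 't \<Rightarrow> real" where
  "DH E Fs vb h \<theta> = (SUP f\<in>argmaxE E Fs vb \<theta>. DeltaE E vb h f \<theta>)"

end

theory Submission
  imports Defs
begin

text \<open>Linearity of the increments gives \<open>E (vb + t h) f \<theta> = E vb f \<theta> + t \<Delta>h f \<theta>\<close>, and the
  Lipschitz bound lets \<open>h\<^sub>n\<close> be replaced by \<open>h\<close> up to \<open>L \<parallel>h\<^sub>n - h\<parallel>\<close>. Evaluating at the maximisers
  of \<open>E vb\<close> bounds the difference quotient from below by the derivative. For the upper bound, on
  the compact set of pairs \<open>(f, \<theta>)\<close> where \<open>\<Delta>h\<close> exceeds the derivative by \<open>e\<close>, the gap to the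
  maximum is positive and continuous, hence at least some \<open>\<delta> > 0\<close>; such \<open>f\<close> cannot become
  maximisers after a step with \<open>t L \<parallel>h\<^sub>n\<parallel> < \<delta>\<close>, and all other \<open>f\<close> increase by at most
  \<open>t\<close> times the derivative plus \<open>e\<close>. This needs the derivative to be continuous: it is upper
  semicontinuous by a Berge-type argument, and lower semicontinuous by (DC).\<close>

lemma continuous_on_Times_slice:
  assumes "continuous_on (A \<times> B) (\<lambda>(a, b). G a b)" "b \<in> B"
  shows "continuous_on A (\<lambda>a. G a b)"
proof -
  have "continuous_on A ((\<lambda>(a, b). G a b) \<circ> (\<lambda>a. (a, b)))"
    by (rule continuous_on_compose[OF _ continuous_on_subset[OF assms(1)]])
       (use assms(2) in \<open>auto intro!: continuous_intros\<close>)
  then show ?thesis by (simp add: o_def)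
qed

lemma compact_Times_equicontinuous_slices:
  fixes G :: "'a::metric_space \<Rightarrow> 'b::metric_space \<Rightarrow> real"
  assumes "compact (A \<times> B)" "continuous_on (A \<times> B) (\<lambda>(a, b). G a b)" "e > 0"
  obtains d where "d > 0" "\<And>a x y. a \<in> A \<Longrightarrow> x \<in> B \<Longrightarrow> y \<in> B \<Longrightarrow> dist x y < d \<Longrightarrow> \<bar>G a x - G a y\<bar> < e"
proof -
  have "uniformly_continuous_on (A \<times> B) (\<lambda>(a, b). G a b)"
    using assms compact_uniformly_continuous by blast
  then obtain d where "d > 0"
    and d: "\<And>p q. p \<in> A \<times> B \<Longrightarrow> q \<in> A \<times> B \<Longrightarrow> dist q p < d \<Longrightarrow> dist ((\<lambda>(a, b). G a b) q) ((\<lambda>(a, b). G a b) p) < e"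
    using assms(3) unfolding uniformly_continuous_on_def by metis
  show thesis
  proof (rule that[OF \<open>d > 0\<close>])
    fix a x y assume "a \<in> A" "x \<in> B" "y \<in> B" "dist x y < d"
    then show "\<bar>G a x - G a y\<bar> < e"
      using d[of "(a, y)" "(a, x)"] by (simp add: dist_Pair_Pair dist_real_def)
  qed
qed

lemma compact_continuous_pos_bounded_below:
  fixes g :: "'a::topological_space \<Rightarrow> real"
  assumes "compact K" "continuous_on K g" "\<And>x. x \<in> K \<Longrightarrow> 0 < g x"
  obtains \<delta> where "\<delta> > 0" "\<And>x. x \<in> K \<Longrightarrow> \<delta> \<le> g x"
proof (cases "K = {}")
  case True then show ?thesis using that[of 1] by auto
next
  case False
  then obtain x where "x \<in> K" "\<forall>y\<in>K. g x \<le> g y"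
    using continuous_attains_inf[OF assms(1) False assms(2)] by blast
  then show ?thesis using that assms(3) by blast
qed

lemma continuous_on_SUP_compact:
  fixes G :: "'a::metric_space \<Rightarrow> 'b::metric_space \<Rightarrow> real"
  assumes A: "compact A" "A \<noteq> {}" and B: "compact B"
    and G: "continuous_on (A \<times> B) (\<lambda>(a, b). G a b)"
  shows "continuous_on B (\<lambda>b. SUP a\<in>A. G a b)"
  unfolding continuous_on_iff
proof (intro ballI allI impI)
  fix b0 and e :: real assume b0: "b0 \<in> B" and "e > 0"
  then obtain d where "d > 0"
    and d: "\<And>a x y. a \<in> A \<Longrightarrow> x \<in> B \<Longrightarrow> y \<in> B \<Longrightarrow> dist x y < d \<Longrightarrow> \<bar>G a x - G a y\<bar> < e / 2"
    using compact_Times_equicontinuous_slices[OF compact_Times[OF A(1) B] G, of "e / 2"] by auto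
  have bdd: "bdd_above ((\<lambda>a. G a b) ` A)" if "b \<in> B" for b
    using compact_continuous_image[OF continuous_on_Times_slice[OF G that] A(1)]
    by (intro bounded_imp_bdd_above compact_imp_bounded)
  have SUP_le: "(SUP a\<in>A. G a x) \<le> (SUP a\<in>A. G a y) + e / 2"
    if "x \<in> B" "y \<in> B" "dist x y < d" for x y
  proof (rule cSUP_least[OF A(2)])
    fix a assume "a \<in> A"
    then have "G a x < G a y + e / 2" using d[of a x y] that unfolding abs_less_iff by linarith
    also have "G a y \<le> (SUP a\<in>A. G a y)" by (rule cSUP_upper[OF \<open>a \<in> A\<close> bdd[OF that(2)]])
    finally show "G a x \<le> (SUP a\<in>A. G a y) + e / 2" by simp
  qed
  show "\<exists>d>0. \<forall>b\<in>B. dist b b0 < d \<longrightarrow> dist (SUP a\<in>A. G a b) (SUP a\<in>A. G a b0) < e"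
  proof (intro exI[of _ d] conjI ballI impI)
    fix b assume "b \<in> B" "dist b b0 < d"
    then show "dist (SUP a\<in>A. G a b) (SUP a\<in>A. G a b0) < e"
      using SUP_le[of b b0] SUP_le[of b0 b] b0 \<open>e > 0\<close>
      by (auto simp: dist_real_def dist_commute abs_less_iff)
  qed (rule \<open>d > 0\<close>)
qed

definition usc_on :: "'a::topological_space set \<Rightarrow> ('a \<Rightarrow> real) \<Rightarrow> bool" where
  "usc_on S g \<longleftrightarrow> (\<forall>x\<in>S. \<forall>a. g x < a \<longrightarrow> (\<forall>\<^sub>F y in at x within S. g y < a))"

lemma continuous_on_if_lsc_usc:
  assumes "lsc_on S g" "usc_on S g"
  shows "continuous_on S g"
  unfolding continuous_on_def order_tendsto_iff
  using assms unfolding lsc_on_def usc_on_def by blast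

locale sup_family =
  fixes E :: "'v \<Rightarrow> 'f::metric_space \<Rightarrow> 't::metric_space \<Rightarrow> real"
    and Fs :: "'f set" and Th :: "'t set"
  assumes F_compact: "compact Fs" and F_nonempty: "Fs \<noteq> {}" and Th_compact: "compact Th"
    and E_continuous: "\<And>v. continuous_on (Fs \<times> Th) (\<lambda>(f, \<theta>). E v f \<theta>)"
begin

lemma bdd_above_slice:
  fixes \<phi> :: "'f \<Rightarrow> 't \<Rightarrow> real"
  assumes "continuous_on (Fs \<times> Th) (\<lambda>(f, \<theta>). \<phi> f \<theta>)" "\<theta> \<in> Th" "S \<subseteq> Fs"
  shows "bdd_above ((\<lambda>f. \<phi> f \<theta>) ` S)"
proof -
  have "bounded ((\<lambda>f. \<phi> f \<theta>) ` Fs)"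
    using compact_continuous_image[OF continuous_on_Times_slice[OF assms(1,2)] F_compact]
    by (rule compact_imp_bounded)
  then show ?thesis using assms(3) by (meson bdd_above_mono bounded_imp_bdd_above image_mono)
qed

lemma E_le_supE: "f \<in> Fs \<Longrightarrow> \<theta> \<in> Th \<Longrightarrow> E v f \<theta> \<le> supE E Fs v \<theta>"
  unfolding supE_def by (rule cSUP_upper) (auto intro: bdd_above_slice E_continuous)

lemma supE_le: "(\<And>f. f \<in> Fs \<Longrightarrow> E v f \<theta> \<le> c) \<Longrightarrow> supE E Fs v \<theta> \<le> c"
  unfolding supE_def using F_nonempty by (rule cSUP_least)

lemma continuous_on_supE: "continuous_on Th (supE E Fs v)"
  unfolding supE_def[abs_def]
  by (rule continuous_on_SUP_compact[OF F_compact F_nonempty Th_compact E_continuous])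

lemma continuous_on_gap: "continuous_on (Fs \<times> Th) (\<lambda>(f, \<theta>). supE E Fs v \<theta> - E v f \<theta>)"
proof -
  have "continuous_on (Fs \<times> Th) (\<lambda>p. supE E Fs v (snd p))"
    by (rule continuous_on_compose2[OF continuous_on_supE continuous_on_snd]) auto
  then show ?thesis
    using E_continuous[of v] by (auto simp: case_prod_unfold intro: continuous_on_diff)
qed

lemma argmaxE_iff_gap_le_0:
  "\<theta> \<in> Th \<Longrightarrow> f \<in> argmaxE E Fs v \<theta> \<longleftrightarrow> f \<in> Fs \<and> supE E Fs v \<theta> - E v f \<theta> \<le> 0"
  unfolding argmaxE_def using E_le_supE[of f \<theta> v] by auto

lemma argmaxE_nonempty:
  assumes "\<theta> \<in> Th"
  shows "argmaxE E Fs v \<theta> \<noteq> {}"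
proof -
  obtain f where "f \<in> Fs" "\<And>g. g \<in> Fs \<Longrightarrow> E v g \<theta> \<le> E v f \<theta>"
    using continuous_attains_sup[OF F_compact F_nonempty
        continuous_on_Times_slice[OF E_continuous assms]] by blast
  then have "f \<in> argmaxE E Fs v \<theta>"
    using supE_le argmaxE_iff_gap_le_0[OF assms] by fastforce
  then show ?thesis by blast
qed

context
  fixes \<phi> :: "'f \<Rightarrow> 't \<Rightarrow> real"
  assumes \<phi>_continuous: "continuous_on (Fs \<times> Th) (\<lambda>(f, \<theta>). \<phi> f \<theta>)"
begin

lemma le_SUP_argmaxE:
  "f \<in> argmaxE E Fs v \<theta> \<Longrightarrow> \<theta> \<in> Th \<Longrightarrow> \<phi> f \<theta> \<le> (SUP g\<in>argmaxE E Fs v \<theta>. \<phi> g \<theta>)"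
  by (rule cSUP_upper) (auto intro!: bdd_above_slice \<phi>_continuous simp: argmaxE_def)

lemma SUP_argmaxE_le:
  "\<theta> \<in> Th \<Longrightarrow> (\<And>f. f \<in> argmaxE E Fs v \<theta> \<Longrightarrow> \<phi> f \<theta> \<le> c) \<Longrightarrow> (SUP f\<in>argmaxE E Fs v \<theta>. \<phi> f \<theta>) \<le> c"
  by (rule cSUP_least[OF argmaxE_nonempty])

text \<open>Near-maximisers are nearly optimal for \<open>\<phi>\<close>, uniformly on any compact \<open>T\<close> on which the
  optimal value is continuous: on the compact set where \<open>\<phi>\<close> exceeds it by \<open>e\<close>, the positive
  continuous gap to the maximum is bounded away from zero.\<close>
lemma near_argmaxE_nearly_optimal:
  assumes T: "T \<subseteq> Th" "compact T"
    and D: "continuous_on T (\<lambda>\<theta>. SUP f\<in>argmaxE E Fs v \<theta>. \<phi> f \<theta>)" and "e > 0"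
  obtains \<delta> where "\<delta> > 0"
    "\<And>f \<theta>. f \<in> Fs \<Longrightarrow> \<theta> \<in> T \<Longrightarrow> supE E Fs v \<theta> - E v f \<theta> < \<delta>
       \<Longrightarrow> \<phi> f \<theta> < (SUP g\<in>argmaxE E Fs v \<theta>. \<phi> g \<theta>) + e"
proof -
  define D where "D \<theta> = (SUP g\<in>argmaxE E Fs v \<theta>. \<phi> g \<theta>)" for \<theta>
  define K where "K = {p \<in> Fs \<times> T. e \<le> \<phi> (fst p) (snd p) - D (snd p)}"
  have cont_K: "continuous_on (Fs \<times> T) (\<lambda>p. \<phi> (fst p) (snd p) - D (snd p))"
  proof (rule continuous_on_diff)
    show "continuous_on (Fs \<times> T) (\<lambda>p. \<phi> (fst p) (snd p))"
      using continuous_on_subset[OF \<phi>_continuous, of "Fs \<times> T"] T(1) by (auto simp: case_prod_unfold)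
    show "continuous_on (Fs \<times> T) (\<lambda>p. D (snd p))"
      by (rule continuous_on_compose2[OF D[folded D_def] continuous_on_snd]) auto
  qed
  have "compact K"
  proof -
    have "closed K"
      unfolding K_def using cont_K compact_imp_closed[OF compact_Times[OF F_compact T(2)]]
      by (intro continuous_on_closed_Collect_le) auto
    moreover have "K = (Fs \<times> T) \<inter> K" by (auto simp: K_def)
    ultimately show ?thesis using compact_Int_closed[OF compact_Times[OF F_compact T(2)]] by metis
  qed
  moreover have "continuous_on K (\<lambda>p. supE E Fs v (snd p) - E v (fst p) (snd p))"
  proof -
    have "K \<subseteq> Fs \<times> Th" using T(1) by (auto simp: K_def)
    then show ?thesis
      using continuous_on_subset[OF continuous_on_gap] by (simp add: case_prod_unfold)
  qed
  moreover have "0 < supE E Fs v (snd p) - E v (fst p) (snd p)" if "p \<in> K" for p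
  proof (rule ccontr)
    assume "\<not> ?thesis"
    with that T(1) have "fst p \<in> argmaxE E Fs v (snd p)"
      by (subst argmaxE_iff_gap_le_0) (auto simp: K_def)
    with le_SUP_argmaxE[of "fst p" v "snd p"] that T(1) \<open>e > 0\<close> show False
      by (auto simp: K_def D_def)
  qed
  ultimately obtain \<delta> where "\<delta> > 0" and \<delta>: "\<And>p. p \<in> K \<Longrightarrow> \<delta> \<le> supE E Fs v (snd p) - E v (fst p) (snd p)"
    by (rule compact_continuous_pos_bounded_below) auto
  show thesis
  proof (rule that[OF \<open>\<delta> > 0\<close>])
    fix f \<theta> assume "f \<in> Fs" "\<theta> \<in> T" "supE E Fs v \<theta> - E v f \<theta> < \<delta>"
    then have "(f, \<theta>) \<notin> K" using \<delta>[of "(f, \<theta>)"] by auto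
    with \<open>f \<in> Fs\<close> \<open>\<theta> \<in> T\<close> show "\<phi> f \<theta> < (SUP g\<in>argmaxE E Fs v \<theta>. \<phi> g \<theta>) + e"
      by (auto simp: K_def D_def)
  qed
qed

text \<open>Upper semicontinuity is automatic, by a Berge-type argument: maximisers at \<open>\<theta>\<close> are
  near-maximisers at any nearby \<open>\<theta>\<^sub>0\<close>.\<close>
lemma usc_on_SUP_argmaxE: "usc_on Th (\<lambda>\<theta>. SUP f\<in>argmaxE E Fs v \<theta>. \<phi> f \<theta>)"
  unfolding usc_on_def
proof (intro ballI allI impI)
  define D where "D \<theta> = (SUP f\<in>argmaxE E Fs v \<theta>. \<phi> f \<theta>)" for \<theta>
  fix \<theta>0 a assume \<theta>0: "\<theta>0 \<in> Th" and "D \<theta>0 < a"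
  define e where "e = (a - D \<theta>0) / 3"
  have "e > 0" using \<open>D \<theta>0 < a\<close> by (simp add: e_def)
  obtain \<delta> where "\<delta> > 0" and \<delta>: "\<And>f \<theta>. f \<in> Fs \<Longrightarrow> \<theta> \<in> {\<theta>0} \<Longrightarrow>
      supE E Fs v \<theta> - E v f \<theta> < \<delta> \<Longrightarrow> \<phi> f \<theta> < D \<theta> + e"
    unfolding D_def by (rule near_argmaxE_nearly_optimal[of "{\<theta>0}" v e]) (use \<theta>0 \<open>e > 0\<close> in auto)
  obtain d1 where "d1 > 0" and d1: "\<And>f x y. f \<in> Fs \<Longrightarrow> x \<in> Th \<Longrightarrow> y \<in> Th \<Longrightarrow> dist x y < d1 \<Longrightarrow>
      \<bar>(supE E Fs v x - E v f x) - (supE E Fs v y - E v f y)\<bar> < \<delta>"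
    using compact_Times_equicontinuous_slices[OF compact_Times[OF F_compact Th_compact] continuous_on_gap \<open>\<delta> > 0\<close>]
    by metis
  obtain d2 where "d2 > 0" and d2: "\<And>f x y. f \<in> Fs \<Longrightarrow> x \<in> Th \<Longrightarrow> y \<in> Th \<Longrightarrow> dist x y < d2 \<Longrightarrow> \<bar>\<phi> f x - \<phi> f y\<bar> < e"
    using compact_Times_equicontinuous_slices[OF compact_Times[OF F_compact Th_compact] \<phi>_continuous \<open>e > 0\<close>]
    by metis
  show "\<forall>\<^sub>F \<theta> in at \<theta>0 within Th. D \<theta> < a"
    unfolding eventually_at
  proof (intro exI[of _ "min d1 d2"] conjI ballI impI)
    fix \<theta> assume \<theta>: "\<theta> \<in> Th" "\<theta> \<noteq> \<theta>0 \<and> dist \<theta> \<theta>0 < min d1 d2"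
    have "D \<theta> \<le> D \<theta>0 + 2 * e"
      unfolding D_def
    proof (rule SUP_argmaxE_le[OF \<theta>(1)])
      fix f assume "f \<in> argmaxE E Fs v \<theta>"
      then have f: "f \<in> Fs" "supE E Fs v \<theta> - E v f \<theta> \<le> 0"
        using argmaxE_iff_gap_le_0[OF \<theta>(1)] by auto
      then have "supE E Fs v \<theta>0 - E v f \<theta>0 < \<delta>"
        using d1[OF f(1) \<theta>(1) \<theta>0] \<theta>(2) by (simp add: abs_less_iff)
      then have "\<phi> f \<theta>0 < D \<theta>0 + e" using \<delta>[OF f(1)] by blast
      then show "\<phi> f \<theta> \<le> (SUP f\<in>argmaxE E Fs v \<theta>0. \<phi> f \<theta>0) + 2 * e"
        using d2[OF f(1) \<theta>(1) \<theta>0] \<theta>(2) unfolding D_def abs_less_iff by linarith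
    qed
    moreover have "3 * e = a - D \<theta>0" by (simp add: e_def)
    ultimately show "D \<theta> < a" using \<open>e > 0\<close> by linarith
  qed (use \<open>d1 > 0\<close> \<open>d2 > 0\<close> in auto)
qed

lemma continuous_on_SUP_argmaxE:
  "lsc_on Th (\<lambda>\<theta>. SUP f\<in>argmaxE E Fs v \<theta>. \<phi> f \<theta>) \<Longrightarrow> continuous_on Th (\<lambda>\<theta>. SUP f\<in>argmaxE E Fs v \<theta>. \<phi> f \<theta>)"
  using continuous_on_if_lsc_usc usc_on_SUP_argmaxE by blast

end

end

locale directional_sup_family = sup_family E Fs Th
  for E :: "'v::real_normed_vector \<Rightarrow> 'f::metric_space \<Rightarrow> 't::metric_space \<Rightarrow> real"
    and Fs :: "'f set" and Th :: "'t set" +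
  fixes L :: real and vb :: 'v
  assumes E_lipschitz: "\<And>f \<theta>. f \<in> Fs \<Longrightarrow> \<theta> \<in> Th \<Longrightarrow> L-lipschitz_on UNIV (\<lambda>v. E v f \<theta>)"
    and DeltaE_linear: "\<And>f \<theta>. f \<in> Fs \<Longrightarrow> \<theta> \<in> Th \<Longrightarrow> linear (\<lambda>v. DeltaE E vb v f \<theta>)"
begin

lemma DeltaE_continuous: "continuous_on (Fs \<times> Th) (\<lambda>(f, \<theta>). DeltaE E vb h f \<theta>)"
  using continuous_on_diff[OF E_continuous[of "vb + h", unfolded case_prod_unfold]
      E_continuous[of vb, unfolded case_prod_unfold]]
  by (simp add: DeltaE_def case_prod_unfold)

lemma DeltaE_lipschitz:
  "f \<in> Fs \<Longrightarrow> \<theta> \<in> Th \<Longrightarrow> \<bar>DeltaE E vb x f \<theta> - DeltaE E vb y f \<theta>\<bar> \<le> L * norm (x - y)"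
  using lipschitz_onD[OF E_lipschitz, of f \<theta> "vb + x" "vb + y"]
  by (simp add: DeltaE_def dist_real_def dist_norm)

lemma DeltaE_bound: "f \<in> Fs \<Longrightarrow> \<theta> \<in> Th \<Longrightarrow> \<bar>DeltaE E vb h f \<theta>\<bar> \<le> L * norm h"
  using DeltaE_lipschitz[of f \<theta> h 0] by (simp add: DeltaE_def)

lemma E_shift: "f \<in> Fs \<Longrightarrow> \<theta> \<in> Th \<Longrightarrow> E (vb + t *\<^sub>R k) f \<theta> = E vb f \<theta> + t * DeltaE E vb k f \<theta>"
  using linear_scale[OF DeltaE_linear, of f \<theta> t k] by (simp add: DeltaE_def)

lemma le_DH: "f \<in> argmaxE E Fs vb \<theta> \<Longrightarrow> \<theta> \<in> Th \<Longrightarrow> DeltaE E vb h f \<theta> \<le> DH E Fs vb h \<theta>"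
  unfolding DH_def by (rule le_SUP_argmaxE[OF DeltaE_continuous])

lemma DH_le: "\<theta> \<in> Th \<Longrightarrow> (\<And>f. f \<in> argmaxE E Fs vb \<theta> \<Longrightarrow> DeltaE E vb h f \<theta> \<le> c) \<Longrightarrow> DH E Fs vb h \<theta> \<le> c"
  unfolding DH_def by (rule SUP_argmaxE_le[OF DeltaE_continuous])

lemma DH_lipschitz: "\<theta> \<in> Th \<Longrightarrow> DH E Fs vb k \<theta> \<le> DH E Fs vb h \<theta> + L * norm (k - h)"
proof (rule DH_le)
  fix f assume "\<theta> \<in> Th" "f \<in> argmaxE E Fs vb \<theta>"
  then show "DeltaE E vb k f \<theta> \<le> DH E Fs vb h \<theta> + L * norm (k - h)"
    using le_DH[of f \<theta> h] DeltaE_lipschitz[of f \<theta> k h] by (auto simp: argmaxE_def abs_le_iff)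
qed

lemma DH_lower_bound:
  assumes "\<theta> \<in> Th"
  shows "- (L * norm h) \<le> DH E Fs vb h \<theta>"
proof -
  obtain f where f: "f \<in> argmaxE E Fs vb \<theta>" using argmaxE_nonempty[OF assms] by blast
  then show ?thesis
    using le_DH[OF f assms, of h] DeltaE_bound[of f \<theta> h] assms by (auto simp: argmaxE_def abs_le_iff)
qed

lemma supE_shift_ge:
  assumes "\<theta> \<in> Th" "t > 0"
  shows "supE E Fs vb \<theta> + t * DH E Fs vb k \<theta> \<le> supE E Fs (vb + t *\<^sub>R k) \<theta>"
proof -
  have "DH E Fs vb k \<theta> \<le> (supE E Fs (vb + t *\<^sub>R k) \<theta> - supE E Fs vb \<theta>) / t"
  proof (rule DH_le[OF assms(1)])
    fix f assume "f \<in> argmaxE E Fs vb \<theta>"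
    then have "f \<in> Fs" "E vb f \<theta> = supE E Fs vb \<theta>" by (auto simp: argmaxE_def)
    then have "supE E Fs vb \<theta> + t * DeltaE E vb k f \<theta> \<le> supE E Fs (vb + t *\<^sub>R k) \<theta>"
      using E_le_supE[of f \<theta> "vb + t *\<^sub>R k"] E_shift[of f \<theta> t k] assms(1) by simp
    then show "DeltaE E vb k f \<theta> \<le> (supE E Fs (vb + t *\<^sub>R k) \<theta> - supE E Fs vb \<theta>) / t"
      using assms(2) by (simp add: pos_le_divide_eq mult.commute)
  qed
  then show ?thesis using assms(2) by (simp add: pos_le_divide_eq mult.commute)
qed

text \<open>Far from the maximisers a step of size \<open>t\<close> cannot close the gap \<open>\<delta>\<close>, so only the
  near-maximisers matter for the upper bound.\<close>
lemma supE_shift_le: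
  assumes "\<theta> \<in> Th" "t \<ge> 0"
    and near: "\<And>f. f \<in> Fs \<Longrightarrow> supE E Fs vb \<theta> - E vb f \<theta> < \<delta> \<Longrightarrow> DeltaE E vb k f \<theta> \<le> c"
    and small: "t * (L * norm k) \<le> \<delta> + t * c"
  shows "supE E Fs (vb + t *\<^sub>R k) \<theta> \<le> supE E Fs vb \<theta> + t * c"
proof (rule supE_le)
  fix f assume f: "f \<in> Fs"
  have shift: "E (vb + t *\<^sub>R k) f \<theta> = E vb f \<theta> + t * DeltaE E vb k f \<theta>"
    by (rule E_shift[OF f assms(1)])
  show "E (vb + t *\<^sub>R k) f \<theta> \<le> supE E Fs vb \<theta> + t * c"
  proof (cases "supE E Fs vb \<theta> - E vb f \<theta> < \<delta>")
    case True
    then have "t * DeltaE E vb k f \<theta> \<le> t * c" using near[OF f] assms(2) by (simp add: mult_left_mono)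
    then show ?thesis using shift E_le_supE[OF f assms(1), of vb] by linarith
  next
    case False
    have "t * DeltaE E vb k f \<theta> \<le> t * (L * norm k)"
      using DeltaE_bound[OF f assms(1), of k] assms(2) by (simp add: mult_left_mono abs_le_iff)
    then show ?thesis using shift False small by linarith
  qed
qed

lemma difference_quotient_close:
  assumes \<theta>: "\<theta> \<in> Th" and "t > 0" and "e > 0"
    and near: "\<And>f. f \<in> Fs \<Longrightarrow> supE E Fs vb \<theta> - E vb f \<theta> < \<delta> \<Longrightarrow> DeltaE E vb h f \<theta> < DH E Fs vb h \<theta> + e"
    and close: "L * norm (k - h) < e" and short: "t * (L * (norm k + norm h)) < \<delta>"
  shows "\<bar>(supE E Fs (vb + t *\<^sub>R k) \<theta> - supE E Fs vb \<theta>) / t - DH E Fs vb h \<theta>\<bar> \<le> 2 * e"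
proof -
  have "DH E Fs vb h \<theta> - 2 * e \<le> DH E Fs vb k \<theta>"
    using DH_lipschitz[OF \<theta>, of h k] close \<open>e > 0\<close> by (simp add: norm_minus_commute)
  then have "t * (DH E Fs vb h \<theta> - 2 * e) \<le> t * DH E Fs vb k \<theta>"
    using \<open>t > 0\<close> by (intro mult_left_mono) auto
  then have "(DH E Fs vb h \<theta> - 2 * e) * t \<le> supE E Fs (vb + t *\<^sub>R k) \<theta> - supE E Fs vb \<theta>"
    using supE_shift_ge[OF \<theta> \<open>t > 0\<close>, of k] by (simp add: mult.commute)
  then have lower: "DH E Fs vb h \<theta> - 2 * e \<le> (supE E Fs (vb + t *\<^sub>R k) \<theta> - supE E Fs vb \<theta>) / t"
    using \<open>t > 0\<close> by (simp add: pos_le_divide_eq)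
  have "supE E Fs (vb + t *\<^sub>R k) \<theta> \<le> supE E Fs vb \<theta> + t * (DH E Fs vb h \<theta> + 2 * e)"
  proof (rule supE_shift_le[OF \<theta> less_imp_le[OF \<open>t > 0\<close>]])
    fix f assume f: "f \<in> Fs" "supE E Fs vb \<theta> - E vb f \<theta> < \<delta>"
    then show "DeltaE E vb k f \<theta> \<le> DH E Fs vb h \<theta> + 2 * e"
      using near[OF f] DeltaE_lipschitz[OF f(1) \<theta>, of k h] close unfolding abs_le_iff by linarith
  next
    have "t * (- (L * norm h)) \<le> t * (DH E Fs vb h \<theta> + 2 * e)"
      using DH_lower_bound[OF \<theta>, of h] \<open>t > 0\<close> \<open>e > 0\<close> by (intro mult_left_mono) auto
    then show "t * (L * norm k) \<le> \<delta> + t * (DH E Fs vb h \<theta> + 2 * e)"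
      using short by (simp add: algebra_simps)
  qed
  then have "supE E Fs (vb + t *\<^sub>R k) \<theta> - supE E Fs vb \<theta> \<le> (DH E Fs vb h \<theta> + 2 * e) * t"
    by (simp add: mult.commute)
  then have "(supE E Fs (vb + t *\<^sub>R k) \<theta> - supE E Fs vb \<theta>) / t \<le> DH E Fs vb h \<theta> + 2 * e"
    using \<open>t > 0\<close> by (simp add: pos_divide_le_eq)
  with lower show ?thesis by linarith
qed

lemma difference_quotient_uniform:
  assumes t: "\<And>n. t n > 0" "t \<longlonglongrightarrow> 0" and hs: "hs \<longlonglongrightarrow> h"
    and DH_cont: "continuous_on Th (DH E Fs vb h)" and "\<epsilon> > 0"
  shows "\<forall>\<^sub>F n in sequentially. \<forall>\<theta>\<in>Th.
    \<bar>(supE E Fs (vb + t n *\<^sub>R hs n) \<theta> - supE E Fs vb \<theta>) / t n - DH E Fs vb h \<theta>\<bar> \<le> \<epsilon>"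
proof -
  define e where "e = \<epsilon> / 2"
  have "e > 0" using \<open>\<epsilon> > 0\<close> by (simp add: e_def)
  obtain \<delta> where "\<delta> > 0" and \<delta>: "\<And>f \<theta>. f \<in> Fs \<Longrightarrow> \<theta> \<in> Th \<Longrightarrow>
      supE E Fs vb \<theta> - E vb f \<theta> < \<delta> \<Longrightarrow> DeltaE E vb h f \<theta> < DH E Fs vb h \<theta> + e"
    by (rule near_argmaxE_nearly_optimal[OF DeltaE_continuous order_refl Th_compact
          DH_cont[unfolded DH_def[abs_def]] \<open>e > 0\<close>, folded DH_def]) auto
  have "(\<lambda>n. L * norm (hs n - h)) \<longlonglongrightarrow> L * norm (h - h)"
    by (intro tendsto_intros hs)
  then have close: "\<forall>\<^sub>F n in sequentially. L * norm (hs n - h) < e"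
    using \<open>e > 0\<close> by (intro order_tendstoD(2)) auto
  have "(\<lambda>n. t n * (L * (norm (hs n) + norm h))) \<longlonglongrightarrow> 0 * (L * (norm h + norm h))"
    by (intro tendsto_intros t hs)
  then have short: "\<forall>\<^sub>F n in sequentially. t n * (L * (norm (hs n) + norm h)) < \<delta>"
    using \<open>\<delta> > 0\<close> by (intro order_tendstoD(2)) auto
  show ?thesis
    using close short
  proof eventually_elim
    case (elim n)
    then show ?case
      using difference_quotient_close[OF _ t(1)[of n] \<open>e > 0\<close> \<delta>] unfolding e_def by auto
  qed
qed

end

text \<open>The hypothesis \<open>L \<ge> 0\<close> is implied by the Lipschitz condition.\<close>
theorem mainTheorem17:
  fixes E :: "'v::real_normed_vector \<Rightarrow> 'f::metric_space \<Rightarrow> 't::metric_space \<Rightarrow> real"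
    and Fs :: "'f set" and Th :: "'t set" and L :: real and vb :: 'v and U :: "'v set"
  assumes F_compact: "compact Fs" and F_nonempty: "Fs \<noteq> {}"
    and Th_compact: "compact Th"
    and EC: "\<And>v. continuous_on (Fs \<times> Th) (\<lambda>(f, \<theta>). E v f \<theta>)"
    and Lip: "L \<ge> 0" "\<And>f \<theta>. f \<in> Fs \<Longrightarrow> \<theta> \<in> Th \<Longrightarrow> L-lipschitz_on UNIV (\<lambda>v. E v f \<theta>)"
    and U_convex: "convex U"
    and Lin: "\<And>f \<theta>. f \<in> Fs \<Longrightarrow> \<theta> \<in> Th \<Longrightarrow> linear (\<lambda>v. DeltaE E vb v f \<theta>)"
    and DC: "\<And>h. h \<in> tangent_cone vb U \<Longrightarrow>
               lsc_on Th (\<lambda>\<theta>. SUP f\<in>argmaxE E Fs vb \<theta>. DeltaE E vb h f \<theta>)"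
  shows "(\<forall>v. continuous_on Th (supE E Fs v))
    \<and> (\<forall>h\<in>tangent_cone vb U. continuous_on Th (DH E Fs vb h))
    \<and> (\<forall>(t::nat \<Rightarrow> real) (hs::nat \<Rightarrow> 'v) h.
          (\<forall>n. t n > 0) \<and> t \<longlonglongrightarrow> 0 \<and> hs \<longlonglongrightarrow> h \<and> h \<in> tangent_cone vb U
          \<and> (\<forall>n. vb + t n *\<^sub>R hs n \<in> U) \<longrightarrow>
          (\<forall>\<epsilon>>0. \<forall>\<^sub>F n in sequentially. \<forall>\<theta>\<in>Th.
             \<bar>(supE E Fs (vb + t n *\<^sub>R hs n) \<theta> - supE E Fs vb \<theta>) / t n - DH E Fs vb h \<theta>\<bar> \<le> \<epsilon>))"
proof -
  interpret directional_sup_family E Fs Th L vb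
    using F_compact F_nonempty Th_compact EC Lip(2) Lin
    by (simp add: directional_sup_family_def sup_family_def directional_sup_family_axioms_def)
  have DH_continuous: "continuous_on Th (DH E Fs vb h)" if "h \<in> tangent_cone vb U" for h
    using continuous_on_SUP_argmaxE[OF DeltaE_continuous DC[OF that]] by (simp add: DH_def[abs_def])
  show ?thesis
    using continuous_on_supE DH_continuous difference_quotient_uniform by blast
qed

end
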